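(* Let $h>0$, $\mathbb{T}:=\{0,h,2h,\ldots\}$, $p_0,p_1\in\mathbb{C}\setminus\{-\tfrac1h\}$ with $p_0\ne p_1$, and define $p:\mathbb{T}\to\mathbb{C}$ by $p(t)=p_0$ if $\tfrac th$ is even and $p(t)=p_1$ if $\tfrac th$ is odd. Let $f:\mathbb{T}\times\mathbb{C}\to\mathbb{C}$ and consider $$\Delta_h\phi(t)-p(t)\phi(t)=f(t,\phi(t)),\qquad t\in\mathbb{T},\qquad(\ast\ast)$$ with $\Delta_h\phi(t):=\frac{\phi(t+h)-\phi(t)}{h}$. Let $\delta>0$ be arbitrary. Suppose there exists $L>0$ with $|f(t,\phi)|\le L$ for all $(t,\phi)\in\mathbb{T}\times\mathbb{C}$, and that all solutions of $(\ast\ast)$ exist on $\mathbb{T}$. If $0<|1+hp_0||1+hp_1|<1$, then all solutions of $(\ast\ast)$ are uniform-ultimately bounded for the bound $LK_0+\delta$, where $$K_0:=h\max\left\{\frac{1+|1+hp_0|}{\big|1-|1+hp_0||1+hp_1|\big|},\ \frac{1+|1+hp_1|}{\big|1-|1+hp_0||1+hp_1|\big|}\right\}.$$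
   Context: The solutions of $(\ast\ast)$ are uniform-ultimately bounded for a bound $B>0$ if for every $\alpha>0$ there exists $T(\alpha)>0$ such that for every $\phi_0\in\mathbb{C}$ with $|\phi_0|<\alpha$, the solution $\phi$ of $(\ast\ast)$ with $\phi(0)=\phi_0$ satisfies $|\phi(t)|<B$ for all $t\in\mathbb{T}$ with $t\ge T(\alpha)$. *)

theory Defs
  imports "HOL-Analysis.Analysis"
begin

definition tscale :: "real \<Rightarrow> real set" where
  "tscale h = {real n * h | n :: nat. True}"

definition pfun :: "real \<Rightarrow> complex \<Rightarrow> complex \<Rightarrow> real \<Rightarrow> complex" where
  "pfun h p0 p1 t = (if \<exists>n :: nat. t = real (2 * n) * h then p0 else p1)"

definition delta_h :: "real \<Rightarrow> (real \<Rightarrow> complex) \<Rightarrow> real \<Rightarrow> complex" where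
  "delta_h h \<phi> t = (\<phi> (t + h) - \<phi> t) / complex_of_real h"

definition is_solution ::
  "real \<Rightarrow> (real \<Rightarrow> complex) \<Rightarrow> (real \<Rightarrow> complex \<Rightarrow> complex) \<Rightarrow> (real \<Rightarrow> complex) \<Rightarrow> bool" where
  "is_solution h p f \<phi> \<longleftrightarrow>
     (\<forall>t \<in> tscale h. delta_h h \<phi> t - p t * \<phi> t = f t (\<phi> t))"

definition uniform_ultimately_bounded ::
  "real \<Rightarrow> (real \<Rightarrow> complex) \<Rightarrow> (real \<Rightarrow> complex \<Rightarrow> complex) \<Rightarrow> real \<Rightarrow> bool" where
  "uniform_ultimately_bounded h p f B \<longleftrightarrow>
     (\<forall>\<alpha> > 0. \<exists>T > 0. \<forall>\<phi>. is_solution h p f \<phi> \<and> cmod (\<phi> 0) < \<alpha> \<longrightarrow>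
        (\<forall>t \<in> tscale h. t \<ge> T \<longrightarrow> cmod (\<phi> t) < B))"

end

theory Submission
  imports Defs
begin

text \<open>Sampling a solution at the grid points n h turns the equation into the recurrence
  x (n+1) = (1 + h p(n h)) x n + h f(n h, x n) with alternating coefficients a = 1 + h p0 and
  b = 1 + h p1. Two steps contract by q = |a| |b| < 1 up to a bounded forcing term, so the
  homogeneous part decays like q^(n div 2) uniformly in |x 0| < \<alpha>, while the forcing part stays
  below h L max(1 + |a|, 1 + |b|) / (1 - q).\<close>

lemma alternating_recurrence_bound_even:
  fixes x u :: "nat \<Rightarrow> 'a::real_normed_div_algebra" and a b :: 'a
  assumes rec: "\<And>n. x (Suc n) = (if even n then a else b) * x n + u n"
    and u: "\<And>n. norm (u n) \<le> M"
    and q1: "norm a * norm b < 1"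
  shows "norm (x (2 * k)) \<le> (norm a * norm b) ^ k * norm (x 0) + M * (1 + norm b) / (1 - norm a * norm b)"
proof (induction k)
  case 0
  have "0 \<le> M" using u[of 0] norm_ge_zero order_trans by blast
  then show ?case using q1 by simp
next
  case (Suc k)
  define q where "q = norm a * norm b"
  define E where "E = M * (1 + norm b) / (1 - q)"
  have step: "x (2 * Suc k) = b * a * x (2 * k) + (b * u (2 * k) + u (2 * k + 1))"
    using rec[of "2 * k"] rec[of "2 * k + 1"] by (simp add: algebra_simps)
  have forcing: "norm (b * u (2 * k) + u (2 * k + 1)) \<le> M * (1 + norm b)"
    using norm_triangle_ineq[of "b * u (2 * k)" "u (2 * k + 1)"]
      mult_left_mono[OF u[of "2 * k"] norm_ge_zero[of b]] u[of "2 * k + 1"]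
    by (simp add: norm_mult algebra_simps)
  have "norm (x (2 * Suc k)) \<le> norm (b * a * x (2 * k)) + norm (b * u (2 * k) + u (2 * k + 1))"
    unfolding step by (rule norm_triangle_ineq)
  also have "\<dots> \<le> q * norm (x (2 * k)) + M * (1 + norm b)"
    using forcing unfolding q_def by (simp add: norm_mult mult.commute)
  also have "\<dots> \<le> q * (q ^ k * norm (x 0) + E) + M * (1 + norm b)"
    using Suc.IH unfolding q_def E_def by (simp add: mult_left_mono)
  also have "\<dots> = q ^ Suc k * norm (x 0) + E"
    using q1 unfolding E_def q_def by (simp add: field_simps)
  finally show ?case unfolding E_def q_def .
qed

lemma alternating_recurrence_bound_odd:
  fixes x u :: "nat \<Rightarrow> 'a::real_normed_div_algebra" and a b :: 'a
  assumes rec: "\<And>n. x (Suc n) = (if even n then a else b) * x n + u n"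
    and u: "\<And>n. norm (u n) \<le> M"
    and q1: "norm a * norm b < 1"
  shows "norm (x (2 * k + 1))
           \<le> norm a * (norm a * norm b) ^ k * norm (x 0) + M * (1 + norm a) / (1 - norm a * norm b)"
proof -
  have "norm (x (2 * k + 1)) \<le> norm a * norm (x (2 * k)) + M"
    using norm_triangle_ineq[of "a * x (2 * k)" "u (2 * k)"] u[of "2 * k"] rec[of "2 * k"]
    by (simp add: norm_mult)
  also have "\<dots> \<le> norm a * ((norm a * norm b) ^ k * norm (x 0)
                    + M * (1 + norm b) / (1 - norm a * norm b)) + M"
    using alternating_recurrence_bound_even[OF rec u q1, of k] by (simp add: mult_left_mono)
  also have "\<dots> = norm a * (norm a * norm b) ^ k * norm (x 0) + M * (1 + norm a) / (1 - norm a * norm b)"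
    using q1 by (simp add: field_simps)
  finally show ?thesis .
qed

lemma alternating_recurrence_bound:
  fixes x u :: "nat \<Rightarrow> 'a::real_normed_div_algebra" and a b :: 'a
  defines "q \<equiv> norm a * norm b"
  assumes rec: "\<And>n. x (Suc n) = (if even n then a else b) * x n + u n"
    and u: "\<And>n. norm (u n) \<le> M"
    and q1: "q < 1"
  shows "norm (x n) \<le> (1 + norm a) * q ^ (n div 2) * norm (x 0)
                        + M * max ((1 + norm a) / (1 - q)) ((1 + norm b) / (1 - q))"
proof -
  have M: "0 \<le> M" using u[of 0] norm_ge_zero order_trans by blast
  have homogeneous: "c * q ^ (n div 2) * norm (x 0) \<le> (1 + norm a) * q ^ (n div 2) * norm (x 0)"
    if "c \<le> 1 + norm a" for c
    using that by (intro mult_right_mono) (auto simp: q_def)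
  have forcing: "M * (c / (1 - q)) \<le> M * max ((1 + norm a) / (1 - q)) ((1 + norm b) / (1 - q))"
    if "c = 1 + norm a \<or> c = 1 + norm b" for c
    using that M by (metis max.cobounded1 max.cobounded2 mult_left_mono)
  show ?thesis
  proof (cases "even n")
    case True
    then obtain k where "n = 2 * k" by blast
    then show ?thesis
      using alternating_recurrence_bound_even[OF rec u q1[unfolded q_def], of k]
        homogeneous[of 1] forcing[of "1 + norm b"] by (simp add: q_def)
  next
    case False
    then obtain k where "n = 2 * k + 1" using oddE by blast
    then show ?thesis
      using alternating_recurrence_bound_odd[OF rec u q1[unfolded q_def], of k]
        homogeneous[of "norm a"] forcing[of "1 + norm a"] by (simp add: q_def)
  qed
qed

lemma pfun_grid:
  assumes "h > 0"
  shows "pfun h p0 p1 (real n * h) = (if even n then p0 else p1)"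
proof -
  have "(\<exists>m::nat. real n * h = real (2 * m) * h) \<longleftrightarrow> even n"
    using assms by (auto simp del: of_nat_mult)
  then show ?thesis unfolding pfun_def by simp
qed

lemma solution_grid_step:
  assumes h: "h > 0" and sol: "is_solution h (pfun h p0 p1) f \<phi>"
  shows "\<phi> (real (Suc n) * h) = (if even n then 1 + h * p0 else 1 + h * p1) * \<phi> (real n * h)
                                + h * f (real n * h) (\<phi> (real n * h))"
proof -
  have "real n * h \<in> tscale h" unfolding tscale_def by blast
  then have "delta_h h \<phi> (real n * h) - (if even n then p0 else p1) * \<phi> (real n * h)
               = f (real n * h) (\<phi> (real n * h))"
    using sol pfun_grid[OF h] unfolding is_solution_def by metis
  then show ?thesis
    using h unfolding delta_h_def by (simp add: field_simps distrib_right)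
qed

lemma uniform_ultimately_bounded_if_decaying:
  assumes h: "h > 0" and \<delta>: "\<delta> > 0"
    and \<beta>: "\<beta> \<longlonglongrightarrow> 0" "\<And>n. \<beta> n \<ge> 0"
    and bound: "\<And>\<phi> n. is_solution h p f \<phi> \<Longrightarrow> cmod (\<phi> (real n * h)) \<le> \<beta> n * cmod (\<phi> 0) + K"
  shows "uniform_ultimately_bounded h p f (K + \<delta>)"
  unfolding uniform_ultimately_bounded_def
proof (intro allI impI)
  fix \<alpha> :: real assume "\<alpha> > 0"
  then have "eventually (\<lambda>n. \<beta> n * \<alpha> < \<delta>) sequentially"
    using \<delta> by (intro order_tendstoD(2)[OF tendsto_mult_left_zero[OF \<beta>(1)]]) simp
  then obtain N where N: "\<And>n. n \<ge> N \<Longrightarrow> \<beta> n * \<alpha> < \<delta>"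
    unfolding eventually_sequentially by blast
  show "\<exists>T>0. \<forall>\<phi>. is_solution h p f \<phi> \<and> cmod (\<phi> 0) < \<alpha> \<longrightarrow>
          (\<forall>t \<in> tscale h. t \<ge> T \<longrightarrow> cmod (\<phi> t) < K + \<delta>)"
  proof (intro exI[of _ "real (Suc N) * h"] conjI allI impI ballI)
    show "0 < real (Suc N) * h" using h by simp
    fix \<phi> t
    assume sol: "is_solution h p f \<phi> \<and> cmod (\<phi> 0) < \<alpha>"
      and "t \<in> tscale h" and "real (Suc N) * h \<le> t"
    then obtain n where t: "t = real n * h" and "n \<ge> N"
      using h unfolding tscale_def by (auto simp: mult_le_cancel_right)
    have "\<beta> n * cmod (\<phi> 0) \<le> \<beta> n * \<alpha>"
      using sol \<beta>(2) by (simp add: mult_left_mono)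
    then show "cmod (\<phi> t) < K + \<delta>"
      using bound[of \<phi> n] sol N[OF \<open>n \<ge> N\<close>] unfolding t by linarith
  qed
qed

theorem corollary3p1:
  fixes h :: real and p0 p1 :: complex and f :: "real \<Rightarrow> complex \<Rightarrow> complex"
    and \<delta> L :: real
  assumes h: "h > 0"
    and p0: "p0 \<noteq> - 1 / complex_of_real h" and p1: "p1 \<noteq> - 1 / complex_of_real h"
    and p01: "p0 \<noteq> p1"
    and \<delta>: "\<delta> > 0"
    and L: "L > 0" and bdd: "\<forall>t \<in> tscale h. \<forall>x. cmod (f t x) \<le> L"
    and exist: "\<forall>\<phi>0. \<exists>\<phi>. is_solution h (pfun h p0 p1) f \<phi> \<and> \<phi> 0 = \<phi>0"
    and pos: "0 < cmod (1 + h * p0) * cmod (1 + h * p1)"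
    and lt1: "cmod (1 + h * p0) * cmod (1 + h * p1) < 1"
  shows "uniform_ultimately_bounded h (pfun h p0 p1) f
           (L * (h * max ((1 + cmod (1 + h * p0)) / \<bar>1 - cmod (1 + h * p0) * cmod (1 + h * p1)\<bar>)
                         ((1 + cmod (1 + h * p1)) / \<bar>1 - cmod (1 + h * p0) * cmod (1 + h * p1)\<bar>)) + \<delta>)"
proof -
  define a where "a = 1 + h * p0"
  define b where "b = 1 + h * p1"
  define q where "q = cmod a * cmod b"
  have q: "0 \<le> q" "q < 1" using lt1 by (simp_all add: q_def a_def b_def)
  have "cmod (\<phi> (real n * h)) \<le> (1 + cmod a) * q ^ (n div 2) * cmod (\<phi> 0)
          + h * L * max ((1 + cmod a) / (1 - q)) ((1 + cmod b) / (1 - q))"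
    if sol: "is_solution h (pfun h p0 p1) f \<phi>" for \<phi> n
  proof -
    have "norm (h * f (real n * h) (\<phi> (real n * h))) \<le> h * L" for n
      using bdd h unfolding tscale_def by (auto simp: norm_mult intro: mult_left_mono)
    then show ?thesis
      using alternating_recurrence_bound[of "\<lambda>n. \<phi> (real n * h)" a b, OF _ _ q(2)[unfolded q_def]]
        solution_grid_step[OF h sol] unfolding a_def b_def q_def by simp
  qed
  moreover have "(\<lambda>n. (1 + cmod a) * q ^ (n div 2)) \<longlonglongrightarrow> 0"
    using filterlim_compose[OF LIMSEQ_power_zero[of q] filterlim_at_top_div_const_nat[of 2]] q
    by (intro tendsto_mult_right_zero) simp
  ultimately show ?thesis
    using uniform_ultimately_bounded_if_decaying[OF h \<delta>, of "\<lambda>n. (1 + cmod a) * q ^ (n div 2)"] q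
    unfolding q_def a_def b_def by (simp add: mult.assoc mult.left_commute)
qed

end
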